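(* Assume the pair $(\mathcal D,\mathcal F)$ is good. For every $r\ge0$, the function $\Phi_r$ is continuous and real-valued on $(X\times X)\times(\mathcal F\times(0,\infty))$, concave in $(x,y)\in X\times X$ and convex in $(\phi,\alpha)\in\mathcal F\times(0,\infty)$, and $$\sup_{x,y\in X}\ \inf_{\phi\in\mathcal F,\alpha>0}\Phi_r(x,y;\phi,\alpha)=\inf_{\phi\in\mathcal F,\alpha>0}\ \sup_{x,y\in X}\Phi_r(x,y;\phi,\alpha)=2\Phi_*(r).$$ Moreover, $r\mapsto\Phi_*(r)$ is nonnegative and concave on $[0,\infty)$.
   Context: Let $(\Omega,P)$ be a Polish space equipped with a $\sigma$-finite Borel measure $P$, let $\mathcal M\subset\mathbb R^m$, and let $\mathcal D=\{p_\mu\}_{\mu\in\mathcal M}$ be a parametric density family: for each $\mu\in\mathcal M$, $p_\mu$ is a nonnegative Borel function on $\Omega$ with $\int_\Omega p_\mu\,dP=1$. Let $\mathcal F$ be a finite-dimensional linear space of Borel functions on $\Omega$ containing the constants. The pair $(\mathcal D,\mathcal F)$ is called good if: (1) $\mathcal M$ is an open convex subset of $\mathbb R^m$; (2) $p_\mu(\omega)>0$ for all $\mu\in\mathcal M$, $\omega\in\Omega$; (3) for all $\mu,\nu\in\mathcal M$ the function $\omega\mapsto\ln(p_\mu(\omega)/p_\nu(\omega))$ belongs to $\mathcal F$; (4) for every $\phi\in\mathcal F$ the function $\mu\mapsto\ln\int_\Omega e^{\phi(\omega)}p_\mu(\omega)P(d\omega)$ is well defined (finite) and concave on $\mathcal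 M$. Let $X\subset\mathbb R^n$ be a nonempty convex compact set, $x\mapsto A(x)$ an affine map $\mathbb R^n\to\mathbb R^m$ with $A(X)\subset\mathcal M$, and $g\in\mathbb R^n$. For $r\ge0$, $x,y\in X$, $\phi\in\mathcal F$, $\alpha>0$ define $$\Phi_r(x,y;\phi,\alpha)=g^Tx-g^Ty+\alpha\ln\int_\Omega e^{\phi(\omega)/\alpha}p_{A(y)}(\omega)P(d\omega)+\alpha\ln\int_\Omega e^{-\phi(\omega)/\alpha}p_{A(x)}(\omega)P(d\omega)+2\alpha r,$$ and $\Phi_*(r)=\tfrac12\inf_{\phi\in\mathcal F,\alpha>0}\sup_{x,y\in X}\Phi_r(x,y;\phi,\alpha)$. *)

theory Defs
  imports "HOL-Analysis.Analysis"
begin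

text \<open>The finite-dimensional space F is presented through a finite spanning family
  b :: 'k \<Rightarrow> 'a \<Rightarrow> real ('k a finite index type); its elements are the linear
  combinations with coefficient vectors c :: real^'k.\<close>

definition fcomb :: "('k::finite \<Rightarrow> 'a \<Rightarrow> real) \<Rightarrow> real^'k \<Rightarrow> 'a \<Rightarrow> real" where
  "fcomb b c = (\<lambda>\<omega>. \<Sum>k\<in>UNIV. c $ k * b k \<omega>)"

definition Fspace :: "('k::finite \<Rightarrow> 'a \<Rightarrow> real) \<Rightarrow> ('a \<Rightarrow> real) set" where
  "Fspace b = range (fcomb b)"

definition density_family :: "'a measure \<Rightarrow> 'm set \<Rightarrow> ('m \<Rightarrow> 'a \<Rightarrow> real) \<Rightarrow> bool" where
  "density_family P M p \<longleftrightarrow>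
     (\<forall>\<mu>\<in>M. p \<mu> \<in> borel_measurable P \<and> (\<forall>\<omega>\<in>space P. p \<mu> \<omega> \<ge> 0)
             \<and> (\<integral>\<^sup>+\<omega>. ennreal (p \<mu> \<omega>) \<partial>P) = 1)"

definition good_pair :: "'a measure \<Rightarrow> 'm::euclidean_space set \<Rightarrow> ('m \<Rightarrow> 'a \<Rightarrow> real)
     \<Rightarrow> ('a \<Rightarrow> real) set \<Rightarrow> bool" where
  "good_pair P M p F \<longleftrightarrow>
     open M \<and> convex M
   \<and> (\<forall>\<mu>\<in>M. \<forall>\<omega>\<in>space P. p \<mu> \<omega> > 0)
   \<and> (\<forall>\<mu>\<in>M. \<forall>\<nu>\<in>M. (\<lambda>\<omega>. ln (p \<mu> \<omega> / p \<nu> \<omega>)) \<in> F)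
   \<and> (\<forall>\<phi>\<in>F. (\<forall>\<mu>\<in>M. integrable P (\<lambda>\<omega>. exp (\<phi> \<omega>) * p \<mu> \<omega>))
             \<and> concave_on M (\<lambda>\<mu>. ln (\<integral>\<omega>. exp (\<phi> \<omega>) * p \<mu> \<omega> \<partial>P)))"

definition PhiR :: "'a measure \<Rightarrow> ('m \<Rightarrow> 'a \<Rightarrow> real) \<Rightarrow> ('n::real_inner \<Rightarrow> 'm) \<Rightarrow> 'n
     \<Rightarrow> real \<Rightarrow> 'n \<Rightarrow> 'n \<Rightarrow> ('a \<Rightarrow> real) \<Rightarrow> real \<Rightarrow> real" where
  "PhiR P p A g r x y \<phi> \<alpha> =
     inner g x - inner g y
     + \<alpha> * ln (\<integral>\<omega>. exp (\<phi> \<omega> / \<alpha>) * p (A y) \<omega> \<partial>P)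
     + \<alpha> * ln (\<integral>\<omega>. exp (- \<phi> \<omega> / \<alpha>) * p (A x) \<omega> \<partial>P)
     + 2 * \<alpha> * r"

text \<open>\<Phi>_*(r) = 1/2 inf_{\<phi>,\<alpha>} sup_{x,y} \<Phi>_r, computed in the extended reals
  (so that no junk value of real Inf/Sup is involved).\<close>
definition PhiStar :: "'a measure \<Rightarrow> ('m \<Rightarrow> 'a \<Rightarrow> real) \<Rightarrow> ('n::real_inner \<Rightarrow> 'm) \<Rightarrow> 'n
     \<Rightarrow> 'n set \<Rightarrow> ('a \<Rightarrow> real) set \<Rightarrow> real \<Rightarrow> ereal" where
  "PhiStar P p A g X F r =
     ereal (1/2) * (INF \<phi>\<alpha>\<in>F \<times> {0<..}. SUP xy\<in>X \<times> X.
        ereal (PhiR P p A g r (fst xy) (snd xy) (fst \<phi>\<alpha>) (snd \<phi>\<alpha>)))"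

end

theory Submission
  imports Defs
begin

text \<open>
  The proof has three ingredients.
  (1) A Sion-type minimax theorem for functions on a compact convex set K times a convex
      set Y that are continuous and concave in the first and convex in the second variable.
      It is proved from scratch: a two-function lemma via separating hyperplanes, an
      induction over finitely many competitors, and compactness.
  (2) Properties of the logarithmic Laplace transform of phi under the densities p mu:
      Hoelder's inequality gives convexity in the coefficients of phi, goodness condition
      (4) gives concavity in mu, and a general joint-continuity lemma for parametrised
      convex functions gives continuity in both.
  (3) Consequences for Phi_r: continuity, concavity in (x, y), convexity in (phi, alpha)
      (perspective of a convex function), nonnegativity on the diagonal.
  The saddle-point identity is then the minimax theorem; since the inner supremum over
  the compact X \<times> X is attained, the upper value is an infimum of functions affine in r
  that are nonnegative for r \<ge> 0, which yields finiteness, nonnegativity and concavity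
  of Phi_*.
\<close>

lemma nonneg_if_lower_bound_on_rays:
  fixes a c :: real
  assumes "\<And>t. t > 0 \<Longrightarrow> c \<le> a * t"
  shows "0 \<le> a"
proof (rule ccontr)
  assume "\<not> 0 \<le> a"
  then have "a < 0" by simp
  have "(\<bar>c\<bar> + 1) / - a > 0" using \<open>a < 0\<close> by (simp add: divide_pos_neg)
  then have "c \<le> a * ((\<bar>c\<bar> + 1) / - a)" by (rule assms)
  also have "\<dots> = - (\<bar>c\<bar> + 1)" using \<open>a < 0\<close> by (simp add: field_simps)
  finally show False by simp
qed

lemma hypograph_pair_convex:
  fixes g1 g2 :: "'x::real_vector \<Rightarrow> real"
  assumes "convex K" "concave_on K g1" "concave_on K g2"
  shows "convex {z::real \<times> real. \<exists>x\<in>K. fst z \<le> g1 x \<and> snd z \<le> g2 x}"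
proof (rule convexI)
  fix z1 z2 :: "real \<times> real" and u v :: real
  assume z: "z1 \<in> {z. \<exists>x\<in>K. fst z \<le> g1 x \<and> snd z \<le> g2 x}"
    "z2 \<in> {z. \<exists>x\<in>K. fst z \<le> g1 x \<and> snd z \<le> g2 x}"
    and uv: "0 \<le> u" "0 \<le> v" "u + v = 1"
  obtain x where x: "x \<in> K" "fst z1 \<le> g1 x" "snd z1 \<le> g2 x" using z by auto
  obtain y where y: "y \<in> K" "fst z2 \<le> g1 y" "snd z2 \<le> g2 y" using z by auto
  have "u *\<^sub>R x + v *\<^sub>R y \<in> K" using assms(1) x y uv by (simp add: convexD)
  moreover have "u * fst z1 + v * fst z2 \<le> g1 (u *\<^sub>R x + v *\<^sub>R y)"
  proof -
    have "u * fst z1 + v * fst z2 \<le> u * g1 x + v * g1 y"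
      using x y uv by (intro add_mono mult_left_mono)
    also have "\<dots> \<le> g1 (u *\<^sub>R x + v *\<^sub>R y)" using assms(2) x y uv by (simp add: concave_on_iff)
    finally show ?thesis .
  qed
  moreover have "u * snd z1 + v * snd z2 \<le> g2 (u *\<^sub>R x + v *\<^sub>R y)"
  proof -
    have "u * snd z1 + v * snd z2 \<le> u * g2 x + v * g2 y"
      using x y uv by (intro add_mono mult_left_mono)
    also have "\<dots> \<le> g2 (u *\<^sub>R x + v *\<^sub>R y)" using assms(3) x y uv by (simp add: concave_on_iff)
    finally show ?thesis .
  qed
  ultimately show "u *\<^sub>R z1 + v *\<^sub>R z2 \<in> {z. \<exists>x\<in>K. fst z \<le> g1 x \<and> snd z \<le> g2 x}"
    by auto
qed

text \<open>Proof: separate the joint hypograph from the open quadrant above the max-min value.\<close>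
lemma two_function_minimax:
  fixes g1 g2 :: "'x::real_normed_vector \<Rightarrow> real"
  assumes K: "compact K" "convex K"
    and cont: "continuous_on K g1" "continuous_on K g2"
    and conc: "concave_on K g1" "concave_on K g2"
    and below: "\<forall>x\<in>K. min (g1 x) (g2 x) < c"
  shows "\<exists>t\<in>{0..1}. \<forall>x\<in>K. (1 - t) * g1 x + t * g2 x < c"
proof (cases "K = {}")
  case False
  have "continuous_on K (\<lambda>x. min (g1 x) (g2 x))"
    using cont by (intro continuous_intros)
  then obtain x0 where x0: "x0 \<in> K" "\<forall>x\<in>K. min (g1 x) (g2 x) \<le> min (g1 x0) (g2 x0)"
    using continuous_attains_sup[OF K(1) False] by blast
  define d where "d = min (g1 x0) (g2 x0)"
  have "d < c" using below x0 d_def by auto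
  define S where "S = {z::real \<times> real. \<exists>x\<in>K. fst z \<le> g1 x \<and> snd z \<le> g2 x}"
  define T :: "(real \<times> real) set" where "T = {d<..} \<times> {d<..}"
  have "S \<inter> T = {}" using x0 unfolding S_def T_def d_def by force
  moreover have "S \<noteq> {}" "T \<noteq> {}" using x0 unfolding S_def T_def by force+
  moreover have "convex S" unfolding S_def by (rule hypograph_pair_convex[OF K(2) conc])
  moreover have "convex T" unfolding T_def by (simp add: convex_Times)
  ultimately obtain a b where ab: "a \<noteq> 0" "\<forall>z\<in>S. inner a z \<le> b" "\<forall>z\<in>T. b \<le> inner a z"
    using separating_hyperplane_sets by metis
  obtain a1 a2 where a: "a = (a1, a2)" by (cases a)
  have "0 \<le> a1"
  proof (rule nonneg_if_lower_bound_on_rays)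
    fix t :: real assume "t > 0"
    then have "(d + 1 + t, d + 1) \<in> T" unfolding T_def by simp
    then show "b - (a1 + a2) * (d + 1) \<le> a1 * t" using ab a by (auto simp: algebra_simps)
  qed
  moreover have "0 \<le> a2"
  proof (rule nonneg_if_lower_bound_on_rays)
    fix t :: real assume "t > 0"
    then have "(d + 1, d + 1 + t) \<in> T" unfolding T_def by simp
    then show "b - (a1 + a2) * (d + 1) \<le> a2 * t" using ab a by (auto simp: algebra_simps)
  qed
  moreover have "a1 \<noteq> 0 \<or> a2 \<noteq> 0" using ab(1) a by (auto simp: zero_prod_def)
  ultimately have s: "a1 + a2 > 0" by linarith
  define e where "e = (c - d) / 2"
  have "(d + e, d + e) \<in> T" unfolding T_def e_def using \<open>d < c\<close> by simp
  then have bound: "b \<le> (a1 + a2) * (d + e)" using ab a by (auto simp: algebra_simps)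
  show ?thesis
  proof (intro bexI[of _ "a2 / (a1 + a2)"] ballI)
    fix x assume "x \<in> K"
    then have "(g1 x, g2 x) \<in> S" unfolding S_def by auto
    then have "a1 * g1 x + a2 * g2 x \<le> (a1 + a2) * (d + e)" using ab a bound by auto
    then have "(a1 * g1 x + a2 * g2 x) / (a1 + a2) \<le> d + e"
      using s by (simp add: pos_divide_le_eq mult.commute)
    moreover have "(1 - a2 / (a1 + a2)) * g1 x + a2 / (a1 + a2) * g2 x
        = (a1 * g1 x + a2 * g2 x) / (a1 + a2)"
    proof -
      have "1 - a2 / (a1 + a2) = a1 / (a1 + a2)" using s by (simp add: field_simps)
      then show ?thesis by (simp add: add_divide_distrib)
    qed
    moreover have "d + e < c" using \<open>d < c\<close> e_def by simp
    ultimately show "(1 - a2 / (a1 + a2)) * g1 x + a2 / (a1 + a2) * g2 x < c"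
      by linarith
  next
    show "a2 / (a1 + a2) \<in> {0..1}" using \<open>0 \<le> a1\<close> \<open>0 \<le> a2\<close> s by auto
  qed
qed auto

lemma concave_superlevel_convex:
  fixes h :: "'x::real_vector \<Rightarrow> real"
  assumes "concave_on K h"
  shows "convex {x\<in>K. c \<le> h x}"
proof (rule convexI)
  fix x y :: 'x and u v :: real
  assume xy: "x \<in> {x\<in>K. c \<le> h x}" "y \<in> {x\<in>K. c \<le> h x}" and uv: "0 \<le> u" "0 \<le> v" "u + v = 1"
  have "u *\<^sub>R x + v *\<^sub>R y \<in> K"
    using concave_on_imp_convex[OF assms] xy uv by (simp add: convexD)
  moreover have "c \<le> h (u *\<^sub>R x + v *\<^sub>R y)"
  proof -
    have "c = u * c + v * c" using uv by (simp add: distrib_right[symmetric])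
    also have "\<dots> \<le> u * h x + v * h y" using xy uv by (intro add_mono mult_left_mono) auto
    also have "\<dots> \<le> h (u *\<^sub>R x + v *\<^sub>R y)" using assms xy uv by (simp add: concave_on_iff)
    finally show ?thesis .
  qed
  ultimately show "u *\<^sub>R x + v *\<^sub>R y \<in> {x\<in>K. c \<le> h x}" by simp
qed

text \<open>Finite version of the minimax inequality, by induction on the number of competitors:
  the new competitor y0 is merged with the one obtained on the superlevel set of y0
  via the two-function lemma and convexity in the second variable.\<close>
lemma finite_minimax:
  fixes f :: "'x::real_normed_vector \<Rightarrow> 'y::real_vector \<Rightarrow> real"
  assumes cont: "\<forall>y\<in>Y. continuous_on K (\<lambda>x. f x y)"
    and conc: "\<forall>y\<in>Y. concave_on K (\<lambda>x. f x y)"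
    and conv: "\<forall>x\<in>K. convex_on Y (f x)"
    and Y: "convex Y" "Y \<noteq> {}"
  shows "\<lbrakk>finite Y0; Y0 \<subseteq> Y; L \<subseteq> K; compact L; convex L; \<forall>x\<in>L. \<exists>y\<in>Y0. f x y < c\<rbrakk>
    \<Longrightarrow> \<exists>y\<in>Y. \<forall>x\<in>L. f x y < c"
proof (induction Y0 arbitrary: L rule: finite_induct)
  case empty
  then show ?case using Y(2) by auto
next
  case (insert y0 Y0)
  have y0: "y0 \<in> Y" using insert by auto
  have cont0: "continuous_on L (\<lambda>x. f x y0)"
    using cont y0 insert.prems(2) continuous_on_subset by blast
  have conc0: "concave_on L (\<lambda>x. f x y0)"
    using conc y0 insert.prems(2,4) concave_on_def convex_on_subset by metis
  define L' where "L' = {x\<in>L. c \<le> f x y0}"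
  have "closed L'"
    using continuous_closed_preimage[OF cont0 compact_imp_closed[OF insert.prems(3)], of "{c..}"]
    unfolding L'_def by (simp add: vimage_def Int_def)
  then have "compact L'" using insert.prems(3) unfolding L'_def
    by (metis (no_types, lifting) compact_Int_closed inf.absorb_iff2 mem_Collect_eq subsetI)
  moreover have "convex L'" unfolding L'_def by (rule concave_superlevel_convex[OF conc0])
  moreover have "\<forall>x\<in>L'. \<exists>y\<in>Y0. f x y < c" using insert.prems(5) unfolding L'_def by force
  ultimately obtain y1 where y1: "y1 \<in> Y" "\<forall>x\<in>L'. f x y1 < c"
    using insert.IH[of L'] insert.prems(1,2) unfolding L'_def by auto
  have cont1: "continuous_on L (\<lambda>x. f x y1)"
    using cont y1 insert.prems(2) continuous_on_subset by blast
  have conc1: "concave_on L (\<lambda>x. f x y1)"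
    using conc y1 insert.prems(2,4) concave_on_def convex_on_subset by metis
  have "\<forall>x\<in>L. min (f x y1) (f x y0) < c" using y1(2) unfolding L'_def by force
  then obtain t where t: "t \<in> {0..1}" "\<forall>x\<in>L. (1 - t) * f x y1 + t * f x y0 < c"
    using two_function_minimax[OF insert.prems(3,4) cont1 cont0 conc1 conc0] by blast
  show ?case
  proof (intro bexI[of _ "(1 - t) *\<^sub>R y1 + t *\<^sub>R y0"] ballI)
    fix x assume x: "x \<in> L"
    have "f x ((1 - t) *\<^sub>R y1 + t *\<^sub>R y0) \<le> (1 - t) * f x y1 + t * f x y0"
      using convex_onD[of Y "f x"] conv x insert.prems(2) t(1) y1(1) y0 by auto
    then show "f x ((1 - t) *\<^sub>R y1 + t *\<^sub>R y0) < c" using t(2) x by fastforce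
  next
    show "(1 - t) *\<^sub>R y1 + t *\<^sub>R y0 \<in> Y" using Y(1) y1 y0 t by (simp add: convex_alt)
  qed
qed

text \<open>Compactness reduces a strict
  gap to the finite version.\<close>
lemma minimax_ereal:
  fixes f :: "'x::real_normed_vector \<Rightarrow> 'y::real_vector \<Rightarrow> real"
  assumes K: "compact K" "convex K"
    and cont: "\<forall>y\<in>Y. continuous_on K (\<lambda>x. f x y)"
    and conc: "\<forall>y\<in>Y. concave_on K (\<lambda>x. f x y)"
    and conv: "\<forall>x\<in>K. convex_on Y (f x)"
    and Y: "convex Y" "Y \<noteq> {}"
  shows "(SUP x\<in>K. INF y\<in>Y. ereal (f x y)) = (INF y\<in>Y. SUP x\<in>K. ereal (f x y))"
proof (rule antisym)
  show "(SUP x\<in>K. INF y\<in>Y. ereal (f x y)) \<le> (INF y\<in>Y. SUP x\<in>K. ereal (f x y))"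
  proof (intro SUP_least INF_greatest)
    fix x y assume "x \<in> K" "y \<in> Y"
    have "(INF y\<in>Y. ereal (f x y)) \<le> ereal (f x y)" using \<open>y \<in> Y\<close> by (rule INF_lower)
    also have "\<dots> \<le> (SUP x\<in>K. ereal (f x y))" using \<open>x \<in> K\<close> by (rule SUP_upper)
    finally show "(INF y\<in>Y. ereal (f x y)) \<le> (SUP x\<in>K. ereal (f x y))" .
  qed
next
  show "(INF y\<in>Y. SUP x\<in>K. ereal (f x y)) \<le> (SUP x\<in>K. INF y\<in>Y. ereal (f x y))"
  proof (rule ccontr)
    assume "\<not> ?thesis"
    then have "(SUP x\<in>K. INF y\<in>Y. ereal (f x y)) < (INF y\<in>Y. SUP x\<in>K. ereal (f x y))" by simp
    then obtain c where c: "(SUP x\<in>K. INF y\<in>Y. ereal (f x y)) < ereal c"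
      "ereal c < (INF y\<in>Y. SUP x\<in>K. ereal (f x y))"
      using ereal_dense2 by blast
    have cover: "\<forall>x\<in>K. \<exists>y\<in>Y. f x y < c"
    proof
      fix x assume "x \<in> K"
      then have "(INF y\<in>Y. ereal (f x y)) \<le> (SUP x\<in>K. INF y\<in>Y. ereal (f x y))"
        by (rule SUP_upper)
      then have "(INF y\<in>Y. ereal (f x y)) < ereal c" using c(1) by (rule le_less_trans)
      then show "\<exists>y\<in>Y. f x y < c" unfolding INF_less_iff by auto
    qed
    have "\<forall>y\<in>Y. \<exists>U. open U \<and> U \<inter> K = (\<lambda>x. f x y) -` {..<c} \<inter> K"
    proof
      fix y assume "y \<in> Y"
      then have "continuous_on K (\<lambda>x. f x y)" using cont by blast
      then show "\<exists>U. open U \<and> U \<inter> K = (\<lambda>x. f x y) -` {..<c} \<inter> K"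
        unfolding continuous_on_open_invariant by simp
    qed
    then obtain U where U: "\<forall>y\<in>Y. open (U y) \<and> U y \<inter> K = (\<lambda>x. f x y) -` {..<c} \<inter> K"
      by (rule exE[OF bchoice])
    have "K \<subseteq> (\<Union>y\<in>Y. U y)"
    proof
      fix x assume "x \<in> K"
      then obtain y where "y \<in> Y" "f x y < c" using cover by blast
      then show "x \<in> (\<Union>y\<in>Y. U y)" using U \<open>x \<in> K\<close> by blast
    qed
    then obtain Y0 where Y0: "Y0 \<subseteq> Y" "finite Y0" "K \<subseteq> (\<Union>y\<in>Y0. U y)"
      using compactE_image[OF K(1), of Y U] U by blast
    have "\<forall>x\<in>K. \<exists>y\<in>Y0. f x y < c"
    proof
      fix x assume "x \<in> K"
      then obtain y where "y \<in> Y0" "x \<in> U y" using Y0(3) by blast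
      then show "\<exists>y\<in>Y0. f x y < c" using U Y0(1) \<open>x \<in> K\<close> by blast
    qed
    then obtain y where y: "y \<in> Y" "\<forall>x\<in>K. f x y < c"
      using finite_minimax[OF cont conc conv Y Y0(2,1) order_refl K] by blast
    have "(INF y\<in>Y. SUP x\<in>K. ereal (f x y)) \<le> (SUP x\<in>K. ereal (f x y))"
      using y(1) by (rule INF_lower)
    also have "\<dots> \<le> ereal c" using y(2) by (intro SUP_least) auto
    finally show False using c(2) by simp
  qed
qed

lemma cball_in_finite_hull:
  fixes c0 :: "'v::euclidean_space"
  obtains V where "finite V" "cball c0 1 \<subseteq> convex hull V"
proof -
  obtain V where V: "finite V"
    "cbox (c0 - (\<Sum>i\<in>Basis. 1 *\<^sub>R i)) (c0 + (\<Sum>i\<in>Basis. 1 *\<^sub>R i)) = convex hull V"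
    using cube_convex_hull[of 1 c0] by auto
  have "c \<in> convex hull V" if "c \<in> cball c0 1" for c
  proof -
    have "\<bar>(c - c0) \<bullet> i\<bar> \<le> 1" if "i \<in> Basis" for i
      using Basis_le_norm[OF that, of "c - c0"] \<open>c \<in> cball c0 1\<close> by (simp add: dist_norm norm_minus_commute)
    then have "c \<in> cbox (c0 - (\<Sum>i\<in>Basis. 1 *\<^sub>R i)) (c0 + (\<Sum>i\<in>Basis. 1 *\<^sub>R i))"
      unfolding mem_box by (auto simp: inner_diff_left inner_add_left abs_le_iff) (smt (verit, best))+
    then show ?thesis using V(2) by simp
  qed
  then show thesis using that V(1) by blast
qed

text \<open>A convex function bounded above by B on the unit ball around c0 is Lipschitz at c0
  with constant B - h c0 (compare h along the ray through c and its reflection).\<close>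
lemma convex_on_local_lipschitz:
  fixes h :: "'v::real_normed_vector \<Rightarrow> real"
  assumes cv: "convex_on UNIV h" and bound: "\<forall>c\<in>cball c0 1. h c \<le> B"
    and c: "dist c c0 \<le> 1"
  shows "\<bar>h c - h c0\<bar> \<le> (B - h c0) * dist c c0"
proof (cases "c = c0")
  case False
  define s where "s = dist c c0"
  have s: "0 < s" "s \<le> 1" using False c s_def by auto
  define e where "e = c0 + (1/s) *\<^sub>R (c - c0)"
  define e' where "e' = c0 - (1/s) *\<^sub>R (c - c0)"
  have "h e \<le> B" "h e' \<le> B"
    using bound s unfolding e_def e'_def s_def by (auto simp: dist_norm)
  have "c = (1 - s) *\<^sub>R c0 + s *\<^sub>R e" unfolding e_def using s by (simp add: algebra_simps)
  then have "h c \<le> (1 - s) * h c0 + s * h e"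
    using s convex_onD[OF cv, of s c0 e] by simp
  also have "\<dots> \<le> (1 - s) * h c0 + s * B" using \<open>h e \<le> B\<close> s by simp
  finally have upper: "h c - h c0 \<le> s * (B - h c0)" by (simp add: algebra_simps)
  have "c0 = (1 - s / (1 + s)) *\<^sub>R c + (s / (1 + s)) *\<^sub>R e'"
  proof -
    have "(1 - s / (1 + s)) *\<^sub>R c + (s / (1 + s)) *\<^sub>R e'
        = (1 / (1 + s)) *\<^sub>R ((1 + s) *\<^sub>R c0)"
      unfolding e'_def using s by (simp add: field_simps algebra_simps scaleR_add_left[symmetric])
    then show ?thesis using s by simp
  qed
  then have "h c0 \<le> (1 - s / (1 + s)) * h c + (s / (1 + s)) * h e'"
    using s convex_onD[OF cv, of "s / (1 + s)" c e'] by simp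
  also have "\<dots> \<le> (1 - s / (1 + s)) * h c + (s / (1 + s)) * B"
    using \<open>h e' \<le> B\<close> s by (simp add: divide_right_mono mult_left_mono)
  also have "\<dots> = (h c + s * B) / (1 + s)"
  proof -
    have "1 - s / (1 + s) = 1 / (1 + s)" using s by (simp add: field_simps)
    then show ?thesis by (simp add: add_divide_distrib)
  qed
  finally have lower: "h c0 - h c \<le> s * (B - h c0)" using s by (simp add: field_simps)
  show ?thesis using upper lower unfolding s_def by (simp add: abs_le_iff mult.commute)
qed simp

text \<open>A family of convex functions depending continuously on a parameter is bounded above on
  the unit ball around c0, uniformly for parameters near a given one: it suffices to
  control the finitely many vertices of an enclosing cube.\<close>
lemma convex_family_locally_bounded:
  fixes f :: "'u::metric_space \<Rightarrow> 'v::euclidean_space \<Rightarrow> real"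
  assumes cont: "\<And>c. continuous_on U (\<lambda>\<mu>. f \<mu> c)"
    and cv: "\<And>\<mu>. \<mu> \<in> U \<Longrightarrow> convex_on UNIV (f \<mu>)"
    and \<mu>0: "\<mu>0 \<in> U"
  obtains B d where "d > 0" "\<And>\<mu> c. \<mu> \<in> U \<Longrightarrow> dist \<mu> \<mu>0 < d \<Longrightarrow> c \<in> cball c0 1 \<Longrightarrow> f \<mu> c \<le> B"
proof -
  obtain V where V: "finite V" "cball c0 1 \<subseteq> convex hull V"
    using cball_in_finite_hull by blast
  define B where "B = Max (f \<mu>0 ` V) + 1"
  have "\<forall>v\<in>V. eventually (\<lambda>\<mu>. f \<mu> v < f \<mu>0 v + 1) (at \<mu>0 within U)"
  proof
    fix v assume "v \<in> V"
    have "((\<lambda>\<mu>. f \<mu> v) \<longlongrightarrow> f \<mu>0 v) (at \<mu>0 within U)"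
      using cont \<mu>0 by (simp add: continuous_on_def)
    then show "eventually (\<lambda>\<mu>. f \<mu> v < f \<mu>0 v + 1) (at \<mu>0 within U)"
      by (rule order_tendstoD) simp
  qed
  then have "eventually (\<lambda>\<mu>. \<forall>v\<in>V. f \<mu> v < f \<mu>0 v + 1) (at \<mu>0 within U)"
    by (rule eventually_ball_finite[OF V(1)])
  then obtain d where d: "d > 0"
    "\<And>\<mu>. \<mu> \<in> U \<Longrightarrow> \<mu> \<noteq> \<mu>0 \<Longrightarrow> dist \<mu> \<mu>0 < d \<Longrightarrow> \<forall>v\<in>V. f \<mu> v < f \<mu>0 v + 1"
    unfolding eventually_at by blast
  have "f \<mu> c \<le> B" if "\<mu> \<in> U" "dist \<mu> \<mu>0 < d" "c \<in> cball c0 1" for \<mu> c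
  proof -
    have "\<forall>v\<in>V. f \<mu> v \<le> B"
    proof
      fix v assume "v \<in> V"
      then have "f \<mu>0 v \<le> Max (f \<mu>0 ` V)" using V(1) by simp
      moreover have "f \<mu> v < f \<mu>0 v + 1 \<or> \<mu> = \<mu>0" using d(2) that \<open>v \<in> V\<close> by blast
      ultimately show "f \<mu> v \<le> B" unfolding B_def by auto
    qed
    then show ?thesis
      using convex_on_convex_hull_bound[OF convex_on_subset[OF cv[OF \<open>\<mu> \<in> U\<close>]]] V(2) that(3)
      by blast
  qed
  then show thesis using that d(1) by blast
qed

lemma continuous_on_if_convex_in_second:
  fixes f :: "'u::metric_space \<Rightarrow> 'v::euclidean_space \<Rightarrow> real"
  assumes cont: "\<And>c. continuous_on U (\<lambda>\<mu>. f \<mu> c)"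
    and cv: "\<And>\<mu>. \<mu> \<in> U \<Longrightarrow> convex_on UNIV (f \<mu>)"
  shows "continuous_on (U \<times> UNIV) (\<lambda>z. f (fst z) (snd z))"
  unfolding continuous_on_def
proof
  fix z0 assume "z0 \<in> U \<times> (UNIV :: 'v set)"
  then obtain \<mu>0 c0 where z0: "z0 = (\<mu>0, c0)" "\<mu>0 \<in> U" by auto
  obtain B d where d: "d > 0"
    and B: "\<And>\<mu> c. \<mu> \<in> U \<Longrightarrow> dist \<mu> \<mu>0 < d \<Longrightarrow> c \<in> cball c0 1 \<Longrightarrow> f \<mu> c \<le> B"
    using convex_family_locally_bounded[OF cont cv z0(2)] by metis
  define F where "F = at z0 within U \<times> (UNIV :: 'v set)"
  have "eventually (\<lambda>z. fst z \<in> U \<and> dist (fst z) \<mu>0 < d \<and> dist (snd z) c0 \<le> 1) F"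
    unfolding F_def eventually_at
  proof (intro exI[of _ "min d 1"] conjI ballI impI)
    fix z :: "'u \<times> 'v" assume z: "z \<in> U \<times> UNIV" "z \<noteq> z0 \<and> dist z z0 < min d 1"
    show "fst z \<in> U" using z by auto
    show "dist (fst z) \<mu>0 < d" using dist_fst_le[of z z0] z z0 by simp
    show "dist (snd z) c0 \<le> 1" using dist_snd_le[of z z0] z z0 by simp
  qed (use d in simp)
  then have estimate: "eventually (\<lambda>z. norm (f (fst z) (snd z) - f \<mu>0 c0)
      \<le> (B - f (fst z) c0) * dist (snd z) c0 + \<bar>f (fst z) c0 - f \<mu>0 c0\<bar>) F"
  proof (rule eventually_mono)
    fix z :: "'u \<times> 'v" assume z: "fst z \<in> U \<and> dist (fst z) \<mu>0 < d \<and> dist (snd z) c0 \<le> 1"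
    then have "\<forall>c\<in>cball c0 1. f (fst z) c \<le> B" using B by blast
    then have "\<bar>f (fst z) (snd z) - f (fst z) c0\<bar> \<le> (B - f (fst z) c0) * dist (snd z) c0"
      using convex_on_local_lipschitz[OF cv] z by blast
    then show "norm (f (fst z) (snd z) - f \<mu>0 c0)
      \<le> (B - f (fst z) c0) * dist (snd z) c0 + \<bar>f (fst z) c0 - f \<mu>0 c0\<bar>" by simp
  qed
  have "continuous_on (U \<times> UNIV) (\<lambda>z. f (fst z) c0)"
    by (rule continuous_on_compose2[OF cont continuous_on_fst[OF continuous_on_id]]) auto
  then have "((\<lambda>z. f (fst z) c0) \<longlongrightarrow> f \<mu>0 c0) F"
    unfolding F_def continuous_on_def using \<open>z0 \<in> U \<times> UNIV\<close> z0(1) by force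
  moreover have "((\<lambda>z. dist (snd z) c0) \<longlongrightarrow> 0) F"
    unfolding F_def z0 by (intro tendsto_eq_intros) auto
  ultimately have "((\<lambda>z. (B - f (fst z) c0) * dist (snd z) c0 + \<bar>f (fst z) c0 - f \<mu>0 c0\<bar>)
      \<longlongrightarrow> (B - f \<mu>0 c0) * 0 + \<bar>f \<mu>0 c0 - f \<mu>0 c0\<bar>) F"
    by (intro tendsto_intros)
  then have "((\<lambda>z. f (fst z) (snd z) - f \<mu>0 c0) \<longlongrightarrow> 0) F"
    by (intro Lim_null_comparison[OF estimate]) simp
  then show "((\<lambda>z. f (fst z) (snd z)) \<longlongrightarrow> f (fst z0) (snd z0)) F"
    unfolding z0 by (simp add: LIM_zero_iff)
qed

lemma perspective_convex:
  fixes h :: "'v::real_vector \<Rightarrow> real"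
  assumes h: "convex_on UNIV h"
  shows "convex_on (UNIV \<times> {0<..}) (\<lambda>z. snd z * h ((1 / snd z) *\<^sub>R fst z))"
proof (rule convex_onI)
  fix t :: real and z1 z2 :: "'v \<times> real"
  assume t: "0 < t" "t < 1" "z1 \<in> UNIV \<times> {0<..}" "z2 \<in> UNIV \<times> {0<..}"
  obtain c1 a1 c2 a2 where z: "z1 = (c1, a1)" "z2 = (c2, a2)" and a: "a1 > 0" "a2 > 0"
    using t by (cases z1, cases z2) auto
  define a where "a = (1 - t) * a1 + t * a2"
  define l where "l = t * a2 / a"
  have "a > 0" unfolding a_def using a t by (simp add: add_pos_pos)
  have l: "0 \<le> l" "l \<le> 1" "a * (1 - l) = (1 - t) * a1" "a * l = t * a2"
    unfolding l_def using \<open>a > 0\<close> a t by (auto simp: field_simps a_def)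
  have comb: "(1 / a) *\<^sub>R ((1 - t) *\<^sub>R c1 + t *\<^sub>R c2)
      = (1 - l) *\<^sub>R ((1 / a1) *\<^sub>R c1) + l *\<^sub>R ((1 / a2) *\<^sub>R c2)"
  proof -
    have "(1 - l) / a1 = (1 - t) / a" "l / a2 = t / a"
      using l(3,4) a \<open>a > 0\<close> by (simp_all add: field_simps)
    then show ?thesis by (simp add: scaleR_add_right)
  qed
  have "a * h ((1 / a) *\<^sub>R ((1 - t) *\<^sub>R c1 + t *\<^sub>R c2))
      \<le> a * ((1 - l) * h ((1 / a1) *\<^sub>R c1) + l * h ((1 / a2) *\<^sub>R c2))"
  proof -
    have "h ((1 - l) *\<^sub>R ((1 / a1) *\<^sub>R c1) + l *\<^sub>R ((1 / a2) *\<^sub>R c2))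
        \<le> (1 - l) * h ((1 / a1) *\<^sub>R c1) + l * h ((1 / a2) *\<^sub>R c2)"
      using convex_onD[OF h] l(1,2) by blast
    then show ?thesis unfolding comb using \<open>a > 0\<close> by (simp add: mult_left_mono)
  qed
  also have "\<dots> = (1 - t) * (a1 * h ((1 / a1) *\<^sub>R c1)) + t * (a2 * h ((1 / a2) *\<^sub>R c2))"
    by (simp add: distrib_left mult.assoc[symmetric] l(3,4))
  finally show "snd ((1 - t) *\<^sub>R z1 + t *\<^sub>R z2) * h ((1 / snd ((1 - t) *\<^sub>R z1 + t *\<^sub>R z2))
        *\<^sub>R fst ((1 - t) *\<^sub>R z1 + t *\<^sub>R z2))
      \<le> (1 - t) * (snd z1 * h ((1 / snd z1) *\<^sub>R fst z1)) + t * (snd z2 * h ((1 / snd z2) *\<^sub>R fst z2))"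
    unfolding z a_def by simp
qed (intro convex_Times convex_UNIV convex_real_interval)

definition log_laplace :: "'a measure \<Rightarrow> ('a \<Rightarrow> real) \<Rightarrow> ('a \<Rightarrow> real) \<Rightarrow> real" where
  "log_laplace P q \<phi> = ln (\<integral>\<omega>. exp (\<phi> \<omega>) * q \<omega> \<partial>P)"

lemma PhiR_log_laplace:
  "PhiR P p A g r x y \<phi> \<alpha> = inner g x - inner g y
     + \<alpha> * log_laplace P (p (A y)) (\<lambda>\<omega>. \<phi> \<omega> / \<alpha>)
     + \<alpha> * log_laplace P (p (A x)) (\<lambda>\<omega>. - \<phi> \<omega> / \<alpha>) + 2 * \<alpha> * r"
  unfolding PhiR_def log_laplace_def ..

text \<open>Against a strictly positive probability density, exponentials have positive integral,
  so logarithmic Laplace transforms are genuine logarithms.\<close>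
lemma exp_integral_pos:
  assumes int: "integrable P (\<lambda>\<omega>. exp (\<phi> \<omega>) * q \<omega>)"
    and pos: "\<forall>\<omega>\<in>space P. q \<omega> > 0"
    and one: "(\<integral>\<^sup>+\<omega>. ennreal (q \<omega>) \<partial>P) = 1"
  shows "(\<integral>\<omega>. exp (\<phi> \<omega>) * q \<omega> \<partial>P) > 0"
proof -
  have nonneg: "AE \<omega> in P. 0 \<le> exp (\<phi> \<omega>) * q \<omega>"
    using pos by (auto intro!: AE_I2 less_imp_le)
  have "(\<integral>\<omega>. exp (\<phi> \<omega>) * q \<omega> \<partial>P) \<noteq> 0"
  proof
    assume "(\<integral>\<omega>. exp (\<phi> \<omega>) * q \<omega> \<partial>P) = 0"
    then have "AE \<omega> in P. exp (\<phi> \<omega>) * q \<omega> = 0"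
      using integral_nonneg_eq_0_iff_AE[OF int nonneg] by simp
    then have "AE \<omega> in P. False"
      by (rule AE_mp) (use pos in \<open>auto intro!: AE_I2\<close>)
    then have "(\<integral>\<^sup>+\<omega>. ennreal (q \<omega>) \<partial>P) = (\<integral>\<^sup>+\<omega>. 0 \<partial>P)"
      by (intro nn_integral_cong_AE) (auto elim: eventually_mono)
    then show False using one by simp
  qed
  then show ?thesis using integral_nonneg_AE[OF nonneg] by simp
qed

text \<open>Hoelder's inequality in logarithmic form: the log-Laplace transform is convex in its
  argument. Proof: divide by the geometric mean and use convexity of exp pointwise.\<close>
lemma log_laplace_convex_comb:
  fixes q u v :: "'a \<Rightarrow> real"
  assumes iu: "integrable P (\<lambda>\<omega>. exp (u \<omega>) * q \<omega>)"
    and iv: "integrable P (\<lambda>\<omega>. exp (v \<omega>) * q \<omega>)"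
    and iw: "integrable P (\<lambda>\<omega>. exp ((1 - t) * u \<omega> + t * v \<omega>) * q \<omega>)"
    and pos: "\<forall>\<omega>\<in>space P. q \<omega> > 0" and one: "(\<integral>\<^sup>+\<omega>. ennreal (q \<omega>) \<partial>P) = 1"
    and t: "0 \<le> t" "t \<le> 1"
  shows "log_laplace P q (\<lambda>\<omega>. (1 - t) * u \<omega> + t * v \<omega>)
      \<le> (1 - t) * log_laplace P q u + t * log_laplace P q v"
proof -
  define U where "U = (\<integral>\<omega>. exp (u \<omega>) * q \<omega> \<partial>P)"
  define V where "V = (\<integral>\<omega>. exp (v \<omega>) * q \<omega> \<partial>P)"
  define W where "W = (\<integral>\<omega>. exp ((1 - t) * u \<omega> + t * v \<omega>) * q \<omega> \<partial>P)"
  define L where "L = (1 - t) * ln U + t * ln V"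
  have "U > 0" "V > 0" "W > 0"
    unfolding U_def V_def W_def using iu iv iw by (auto intro: exp_integral_pos[OF _ pos one])
  have pointwise: "exp ((1 - t) * u \<omega> + t * v \<omega>) * q \<omega> * exp (- L)
      \<le> (1 - t) * (exp (u \<omega>) * q \<omega> / U) + t * (exp (v \<omega>) * q \<omega> / V)"
    if "\<omega> \<in> space P" for \<omega>
  proof -
    have "exp ((1 - t) * u \<omega> + t * v \<omega>) * exp (- L)
        = exp ((1 - t) * (u \<omega> - ln U) + t * (v \<omega> - ln V))"
      unfolding L_def by (simp add: exp_add[symmetric] algebra_simps)
    also have "\<dots> \<le> (1 - t) * exp (u \<omega> - ln U) + t * exp (v \<omega> - ln V)"
      using convex_onD[OF exp_convex, of t] t by simp
    also have "\<dots> = (1 - t) * (exp (u \<omega>) / U) + t * (exp (v \<omega>) / V)"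
      using \<open>U > 0\<close> \<open>V > 0\<close> by (simp add: exp_diff)
    finally have "exp ((1 - t) * u \<omega> + t * v \<omega>) * exp (- L) * q \<omega>
        \<le> ((1 - t) * (exp (u \<omega>) / U) + t * (exp (v \<omega>) / V)) * q \<omega>"
      using pos that by (intro mult_right_mono) auto
    then show ?thesis by (simp add: algebra_simps)
  qed
  have "W * exp (- L) = (\<integral>\<omega>. exp ((1 - t) * u \<omega> + t * v \<omega>) * q \<omega> * exp (- L) \<partial>P)"
    unfolding W_def by simp
  also have "\<dots> \<le> (\<integral>\<omega>. (1 - t) * (exp (u \<omega>) * q \<omega> / U) + t * (exp (v \<omega>) * q \<omega> / V) \<partial>P)"
    using pointwise iu iv iw by (intro integral_mono) auto
  also have "\<dots> = (1 - t) * (U / U) + t * (V / V)"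
    using iu iv unfolding U_def V_def by (simp add: integral_add)
  also have "\<dots> = 1" using \<open>U > 0\<close> \<open>V > 0\<close> by simp
  finally have "W \<le> exp L" by (simp add: exp_minus field_simps)
  then have "ln W \<le> L" using \<open>W > 0\<close> by (metis ln_exp ln_mono)
  then show ?thesis unfolding log_laplace_def W_def L_def U_def V_def .
qed

lemma log_laplace_zero:
  assumes "q \<in> borel_measurable P" "\<forall>\<omega>\<in>space P. q \<omega> \<ge> 0"
    and "(\<integral>\<^sup>+\<omega>. ennreal (q \<omega>) \<partial>P) = 1"
  shows "log_laplace P q (\<lambda>\<omega>. 0) = 0"
proof -
  have "(\<integral>\<omega>. q \<omega> \<partial>P) = enn2real (\<integral>\<^sup>+\<omega>. ennreal (q \<omega>) \<partial>P)"
    using assms(1,2) by (intro integral_eq_nn_integral) auto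
  then show ?thesis using assms(3) unfolding log_laplace_def by simp
qed

lemma fcomb_combination:
  "fcomb b (s *\<^sub>R c + t *\<^sub>R d) = (\<lambda>\<omega>. s * fcomb b c \<omega> + t * fcomb b d \<omega>)"
  unfolding fcomb_def by (simp add: algebra_simps sum.distrib sum_distrib_left)

lemma fcomb_scaled:
  "(\<lambda>\<omega>. fcomb b c \<omega> / \<alpha>) = fcomb b ((1 / \<alpha>) *\<^sub>R c)"
  "(\<lambda>\<omega>. - fcomb b c \<omega> / \<alpha>) = fcomb b (- ((1 / \<alpha>) *\<^sub>R c))"
  using fcomb_combination[of b "1 / \<alpha>" c 0 0] fcomb_combination[of b "- 1 / \<alpha>" c 0 0]
  by (simp_all add: divide_minus_left)

lemma fcomb_in_Fspace: "fcomb b c \<in> Fspace b"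
  unfolding Fspace_def by simp

lemma log_laplace_concave_in_parameter:
  assumes "good_pair P M p F" "\<phi> \<in> F"
  shows "concave_on M (\<lambda>\<mu>. log_laplace P (p \<mu>) \<phi>)"
  using assms unfolding good_pair_def log_laplace_def by blast

context
  fixes P :: "'a measure" and M :: "'m::euclidean_space set"
    and p :: "'m \<Rightarrow> 'a \<Rightarrow> real" and b :: "'k::finite \<Rightarrow> 'a \<Rightarrow> real"
  assumes good: "good_pair P M p (Fspace b)" and dens: "density_family P M p"
begin

lemma log_laplace_convex_in_coefficients:
  assumes \<mu>: "\<mu> \<in> M"
  shows "convex_on UNIV (\<lambda>c. log_laplace P (p \<mu>) (fcomb b c))"
proof (rule convex_onI)
  fix t :: real and c d :: "real^'k" assume t: "0 < t" "t < 1"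
  have int: "integrable P (\<lambda>\<omega>. exp (fcomb b e \<omega>) * p \<mu> \<omega>)" for e
    using good \<mu> fcomb_in_Fspace unfolding good_pair_def by blast
  show "log_laplace P (p \<mu>) (fcomb b ((1 - t) *\<^sub>R c + t *\<^sub>R d))
      \<le> (1 - t) * log_laplace P (p \<mu>) (fcomb b c) + t * log_laplace P (p \<mu>) (fcomb b d)"
    unfolding fcomb_combination
    using log_laplace_convex_comb[OF int[of c] int[of d] int[of "(1 - t) *\<^sub>R c + t *\<^sub>R d",
        unfolded fcomb_combination]] good dens \<mu> t
    unfolding good_pair_def density_family_def by auto
qed simp

text \<open>Joint continuity in (mu, coefficients): concave on the open set M hence continuous in
  mu, convex in the coefficients, so the joint continuity lemma applies.\<close>
lemma log_laplace_continuous: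
  "continuous_on (M \<times> UNIV) (\<lambda>z. log_laplace P (p (fst z)) (fcomb b (snd z)))"
proof (rule continuous_on_if_convex_in_second)
  fix c :: "real^'k"
  have "convex_on M (\<lambda>\<mu>. - log_laplace P (p \<mu>) (fcomb b c))"
    using log_laplace_concave_in_parameter[OF good fcomb_in_Fspace] by (simp add: concave_on_def)
  moreover have "open M" using good unfolding good_pair_def by blast
  ultimately have "continuous_on M (\<lambda>\<mu>. - (- log_laplace P (p \<mu>) (fcomb b c)))"
    by (intro continuous_on_minus convex_on_continuous)
  then show "continuous_on M (\<lambda>\<mu>. log_laplace P (p \<mu>) (fcomb b c))" by simp
qed (rule log_laplace_convex_in_coefficients)

lemma log_laplace_of_zero:
  assumes "\<mu> \<in> M"
  shows "log_laplace P (p \<mu>) (fcomb b 0) = 0"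
proof -
  have "fcomb b 0 = (\<lambda>\<omega>. 0)" unfolding fcomb_def by simp
  then show ?thesis
    using log_laplace_zero[of "p \<mu>" P] dens assms unfolding density_family_def by auto
qed

end

lemma affine_fun_convex_concave:
  fixes f :: "'v::real_vector \<Rightarrow> real"
  assumes aff: "\<And>x y t. f ((1 - t) *\<^sub>R x + t *\<^sub>R y) = (1 - t) * f x + t * f y"
    and "convex S"
  shows "convex_on S f" "concave_on S f"
  using assms by (auto intro!: convex_onI simp: concave_on_def)

lemma concave_on_affine_comp:
  assumes G: "concave_on M G"
    and L: "\<And>x y t. L ((1 - t) *\<^sub>R x + t *\<^sub>R y) = (1 - t) *\<^sub>R L x + t *\<^sub>R L y"
    and "L ` S \<subseteq> M" "convex S"
  shows "concave_on S (\<lambda>z. G (L z))"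
  unfolding concave_on_def
proof (rule convex_onI)
  fix t :: real and x y assume t: "0 < t" "t < 1" "x \<in> S" "y \<in> S"
  then have "L x \<in> M" "L y \<in> M" using \<open>L ` S \<subseteq> M\<close> by auto
  then show "- G (L ((1 - t) *\<^sub>R x + t *\<^sub>R y)) \<le> (1 - t) * - G (L x) + t * - G (L y)"
    using concave_onD[OF G, of t "L x" "L y"] t unfolding L by simp
qed fact

lemma convex_on_neg_arg:
  assumes "convex_on UNIV h"
  shows "convex_on UNIV (\<lambda>c. h (- c :: 'v::real_vector))"
proof (rule convex_onI)
  fix t :: real and x y :: 'v assume "0 < t" "t < 1"
  moreover have "- ((1 - t) *\<^sub>R x + t *\<^sub>R y) = (1 - t) *\<^sub>R (- x) + t *\<^sub>R (- y)"
    by (simp add: algebra_simps)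
  ultimately show "h (- ((1 - t) *\<^sub>R x + t *\<^sub>R y)) \<le> (1 - t) * h (- x) + t * h (- y)"
    using convex_onD[OF assms, of t "- x" "- y"] by simp
qed simp

lemma affine_map_combination:
  assumes "linear (\<lambda>x. A x - A 0)"
  shows "A ((1 - t) *\<^sub>R x + t *\<^sub>R y) = (1 - t) *\<^sub>R A x + t *\<^sub>R (A y :: 'm::real_vector)"
proof -
  interpret linear "\<lambda>x. A x - A 0" by fact
  have "A ((1 - t) *\<^sub>R x + t *\<^sub>R y) - A 0 = (1 - t) *\<^sub>R (A x - A 0) + t *\<^sub>R (A y - A 0)"
    by (simp only: add scale)
  then show ?thesis by (simp add: algebra_simps)
qed

lemma affine_map_continuous:
  fixes A :: "'n::euclidean_space \<Rightarrow> 'm::euclidean_space"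
  assumes "linear (\<lambda>x. A x - A 0)"
  shows "continuous_on S A"
proof -
  have "continuous_on S (\<lambda>x. (A x - A 0) + A 0)"
    using assms by (intro continuous_intros linear_continuous_on linear_conv_bounded_linear[THEN iffD1])
  then show ?thesis by simp
qed

lemma PhiR_fcomb:
  "PhiR P p A g r x y (fcomb b c) \<alpha> = inner g x - inner g y
     + \<alpha> * log_laplace P (p (A y)) (fcomb b ((1 / \<alpha>) *\<^sub>R c))
     + \<alpha> * log_laplace P (p (A x)) (fcomb b (- ((1 / \<alpha>) *\<^sub>R c))) + 2 * \<alpha> * r"
  unfolding PhiR_log_laplace fcomb_scaled ..

context
  fixes P :: "'a measure" and M :: "'m::euclidean_space set"
    and p :: "'m \<Rightarrow> 'a \<Rightarrow> real" and b :: "'k::finite \<Rightarrow> 'a \<Rightarrow> real"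
    and X :: "'n::euclidean_space set" and A :: "'n \<Rightarrow> 'm" and g :: 'n
  assumes good: "good_pair P M p (Fspace b)" and dens: "density_family P M p"
    and A_affine: "linear (\<lambda>x. A x - A 0)" and A_X: "A ` X \<subseteq> M"
begin

lemma PhiR_continuous:
  "continuous_on ((X \<times> X) \<times> (UNIV \<times> {0<..}))
     (\<lambda>((x, y), (c, \<alpha>)). PhiR P p A g r x y (fcomb b c) \<alpha>)"
proof -
  have LL: "continuous_on S (\<lambda>z. log_laplace P (p (A (u z))) (fcomb b (v z)))"
    if "continuous_on S u" "continuous_on S v" "u ` S \<subseteq> X" for S u and v :: "_ \<Rightarrow> real^'k"
  proof -
    have "continuous_on S (\<lambda>z. A (u z))"
      using continuous_on_compose2[OF affine_map_continuous[OF A_affine] that(1) subset_UNIV] .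
    then have "continuous_on S (\<lambda>z. (A (u z), v z))"
      using that(2) by (rule continuous_on_Pair)
    moreover have "(\<lambda>z. (A (u z), v z)) ` S \<subseteq> M \<times> UNIV" using that A_X by auto
    ultimately have "continuous_on S (\<lambda>z. log_laplace P (p (fst (A (u z), v z))) (fcomb b (snd (A (u z), v z))))"
      by (rule continuous_on_compose2[OF log_laplace_continuous[OF good dens]])
    then show ?thesis by simp
  qed
  define S where "S = (X \<times> X) \<times> ((UNIV :: (real^'k) set) \<times> {0::real<..})"
  have scaled: "continuous_on S (\<lambda>z. (1 / snd (snd z)) *\<^sub>R fst (snd z))"
    unfolding S_def by (intro continuous_intros) auto
  have "continuous_on S (\<lambda>z. log_laplace P (p (A (snd (fst z)))) (fcomb b ((1 / snd (snd z)) *\<^sub>R fst (snd z))))"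
    by (rule LL[OF _ scaled]) (auto simp: S_def intro!: continuous_intros)
  moreover have "continuous_on S (\<lambda>z. log_laplace P (p (A (fst (fst z)))) (fcomb b (- ((1 / snd (snd z)) *\<^sub>R fst (snd z)))))"
    by (rule LL[OF _ continuous_on_minus[OF scaled]]) (auto simp: S_def intro!: continuous_intros)
  ultimately show ?thesis
    unfolding PhiR_fcomb case_prod_unfold S_def[symmetric]
    by (intro continuous_intros)
qed

lemma PhiR_concave:
  assumes X: "convex X" and \<phi>: "\<phi> \<in> Fspace b" and \<alpha>: "0 \<le> \<alpha>"
  shows "concave_on (X \<times> X) (\<lambda>(x, y). PhiR P p A g r x y \<phi> \<alpha>)"
proof -
  obtain c where c: "\<phi> = fcomb b c" using \<phi> unfolding Fspace_def by blast
  have XX: "convex (X \<times> X)" using X X by (rule convex_Times)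
  have "concave_on (X \<times> X) (\<lambda>z. log_laplace P (p (A (snd z))) (fcomb b d))" for d
    by (rule concave_on_affine_comp[OF log_laplace_concave_in_parameter[OF good fcomb_in_Fspace]
          _ _ XX]) (use affine_map_combination[OF A_affine] A_X in auto)
  moreover have "concave_on (X \<times> X) (\<lambda>z. log_laplace P (p (A (fst z))) (fcomb b d))" for d
    by (rule concave_on_affine_comp[OF log_laplace_concave_in_parameter[OF good fcomb_in_Fspace]
          _ _ XX]) (use affine_map_combination[OF A_affine] A_X in auto)
  moreover have "concave_on (X \<times> X) (\<lambda>z. inner g (fst z) - inner g (snd z))"
    by (rule affine_fun_convex_concave(2)[OF _ XX]) (simp add: inner_add_right algebra_simps)
  ultimately show ?thesis
    unfolding c PhiR_fcomb case_prod_unfold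
    by (intro concave_on_add concave_on_cmul concave_on_const[THEN iffD2] XX) (use X \<alpha> in auto)
qed

text \<open>Convexity of Phi_r in (c, alpha): both log-Laplace terms are perspectives of convex
  functions, and the remaining terms are affine.\<close>
lemma PhiR_convex:
  assumes "A x \<in> M" "A y \<in> M"
  shows "convex_on (UNIV \<times> {0<..}) (\<lambda>(c, \<alpha>). PhiR P p A g r x y (fcomb b c) \<alpha>)"
proof -
  have Y: "convex ((UNIV :: (real^'k) set) \<times> {0::real<..})"
    by (intro convex_Times convex_UNIV convex_real_interval)
  have "convex_on (UNIV \<times> {0<..}) (\<lambda>z::(real^'k) \<times> real. 2 * snd z * r)"
    by (rule affine_fun_convex_concave(1)[OF _ Y]) (simp add: algebra_simps)
  then show ?thesis
    unfolding PhiR_fcomb case_prod_unfold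
    by (intro convex_on_add convex_on_const[THEN iffD2] Y
        perspective_convex[OF log_laplace_convex_in_coefficients[OF good dens assms(2)]]
        perspective_convex[OF convex_on_neg_arg[OF log_laplace_convex_in_coefficients[OF good dens assms(1)]]])
qed

text \<open>On the diagonal x = y, Phi_r is nonnegative: by convexity the two log-Laplace terms
  at d and -d add up to at least twice the value at 0, which is 0.\<close>
lemma PhiR_diagonal_nonneg:
  assumes "A x \<in> M" "0 \<le> \<alpha>" "0 \<le> r"
  shows "0 \<le> PhiR P p A g r x x (fcomb b c) \<alpha>"
proof -
  define d where "d = (1 / \<alpha>) *\<^sub>R c"
  have "log_laplace P (p (A x)) (fcomb b ((1 - 1/2) *\<^sub>R d + (1/2) *\<^sub>R (- d)))
      \<le> (1 - 1/2) * log_laplace P (p (A x)) (fcomb b d) + (1/2) * log_laplace P (p (A x)) (fcomb b (- d))"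
    by (rule convex_onD[OF log_laplace_convex_in_coefficients[OF good dens assms(1)]]) auto
  then have "0 \<le> log_laplace P (p (A x)) (fcomb b d) + log_laplace P (p (A x)) (fcomb b (- d))"
    using log_laplace_of_zero[OF good dens assms(1)] by simp
  then show ?thesis
    unfolding PhiR_fcomb d_def[symmetric] using assms(2,3) by (simp add: distrib_left[symmetric])
qed

end

lemma SUP_continuous_compact_shift:
  fixes h :: "'x::topological_space \<Rightarrow> real"
  assumes "compact K" "K \<noteq> {}" "continuous_on K h"
  shows "(SUP z\<in>K. ereal (h z + c)) = ereal (Sup (h ` K) + c)"
proof -
  obtain z0 where z0: "z0 \<in> K" "\<And>z. z \<in> K \<Longrightarrow> h z \<le> h z0"
    using continuous_attains_sup[OF assms] by blast
  have "Sup (h ` K) = h z0" using z0 by (intro cSup_eq_maximum) auto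
  moreover have "(SUP z\<in>K. ereal (h z + c)) = ereal (h z0 + c)"
    using z0 by (intro antisym SUP_least SUP_upper2[of z0]) auto
  ultimately show ?thesis by simp
qed

lemma INF_affine_bounds:
  fixes s k :: "'w \<Rightarrow> real"
  assumes "W \<noteq> {}" and lower: "\<forall>w\<in>W. 0 \<le> s w + k w * r"
  shows "0 \<le> (INF w\<in>W. ereal (s w + k w * r))" "(INF w\<in>W. ereal (s w + k w * r)) < \<infinity>"
proof -
  show "0 \<le> (INF w\<in>W. ereal (s w + k w * r))" using lower by (auto intro: INF_greatest)
  obtain w where "w \<in> W" using assms(1) by blast
  then have "(INF w\<in>W. ereal (s w + k w * r)) \<le> ereal (s w + k w * r)" by (rule INF_lower)
  then show "(INF w\<in>W. ereal (s w + k w * r)) < \<infinity>" by (rule le_less_trans) simp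
qed

lemma INF_affine_concave:
  fixes s k :: "'w \<Rightarrow> real"
  assumes "W \<noteq> {}" "convex I" and lower: "\<And>w r. w \<in> W \<Longrightarrow> r \<in> I \<Longrightarrow> 0 \<le> s w + k w * r"
  shows "concave_on I (\<lambda>r. real_of_ereal (INF w\<in>W. ereal (s w + k w * r)))"
proof -
  define Q where "Q r = (INF w\<in>W. ereal (s w + k w * r))" for r
  have Q: "Q r = ereal (real_of_ereal (Q r))" if "r \<in> I" for r
  proof -
    have "\<forall>w\<in>W. 0 \<le> s w + k w * r" using lower that by blast
    from INF_affine_bounds[OF assms(1) this] show ?thesis unfolding Q_def[symmetric]
      by (cases "Q r") auto
  qed
  have below: "real_of_ereal (Q r) \<le> s w + k w * r" if "r \<in> I" "w \<in> W" for r w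
  proof -
    have "Q r \<le> ereal (s w + k w * r)" unfolding Q_def using that(2) by (rule INF_lower)
    then show ?thesis by (subst (asm) Q[OF that(1)]) simp
  qed
  show ?thesis
    unfolding Q_def[symmetric] concave_on_iff
  proof (intro conjI assms(2) ballI allI impI)
    fix r1 r2 u v :: real assume h: "r1 \<in> I" "r2 \<in> I" "0 \<le> u" "0 \<le> v" "u + v = 1"
    have r: "u *\<^sub>R r1 + v *\<^sub>R r2 \<in> I" using convexD[OF assms(2) h] .
    have "ereal (u * real_of_ereal (Q r1) + v * real_of_ereal (Q r2)) \<le> Q (u *\<^sub>R r1 + v *\<^sub>R r2)"
      unfolding Q_def[of "u *\<^sub>R r1 + v *\<^sub>R r2"]
    proof (rule INF_greatest)
      fix w assume "w \<in> W"
      have "u * real_of_ereal (Q r1) + v * real_of_ereal (Q r2)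
          \<le> u * (s w + k w * r1) + v * (s w + k w * r2)"
        using below[OF h(1) \<open>w \<in> W\<close>] below[OF h(2) \<open>w \<in> W\<close>] h(3,4)
        by (intro add_mono mult_left_mono)
      also have "\<dots> = s w + k w * (u *\<^sub>R r1 + v *\<^sub>R r2)"
      proof -
        have "u * s w + v * s w = s w" using h(5) by (simp add: distrib_right[symmetric])
        then show ?thesis by (simp add: algebra_simps)
      qed
      finally show "ereal (u * real_of_ereal (Q r1) + v * real_of_ereal (Q r2))
          \<le> ereal (s w + k w * (u *\<^sub>R r1 + v *\<^sub>R r2))" by simp
    qed
    then show "u * real_of_ereal (Q r1) + v * real_of_ereal (Q r2) \<le> real_of_ereal (Q (u *\<^sub>R r1 + v *\<^sub>R r2))"
      by (subst (asm) Q[OF r]) simp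
  qed
qed

lemma Fspace_times_reparam:
  "Fspace b \<times> {0<..} = (\<lambda>w. (fcomb b (fst w), snd w)) ` (UNIV \<times> {0<..})"
  unfolding Fspace_def by (auto simp: image_iff)

lemma PhiR_shift: "PhiR P p A g r x y \<phi> \<alpha> = PhiR P p A g 0 x y \<phi> \<alpha> + 2 * \<alpha> * r"
  unfolding PhiR_def by simp

context
  fixes P :: "'a measure" and M :: "'m::euclidean_space set"
    and p :: "'m \<Rightarrow> 'a \<Rightarrow> real" and b :: "'k::finite \<Rightarrow> 'a \<Rightarrow> real"
    and X :: "'n::euclidean_space set" and A :: "'n \<Rightarrow> 'm" and g :: 'n
  assumes good: "good_pair P M p (Fspace b)" and dens: "density_family P M p"
    and A_affine: "linear (\<lambda>x. A x - A 0)" and A_X: "A ` X \<subseteq> M"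
    and X: "compact X" "convex X" "X \<noteq> {}"
begin

lemma PhiR_continuous_in_xy:
  assumes "\<alpha> > 0"
  shows "continuous_on (X \<times> X) (\<lambda>z. PhiR P p A g r (fst z) (snd z) (fcomb b c) \<alpha>)"
proof -
  have "continuous_on (X \<times> X) (\<lambda>z. (z, (c, \<alpha>)))" by (intro continuous_intros)
  moreover have "(\<lambda>z. (z, (c, \<alpha>))) ` (X \<times> X) \<subseteq> (X \<times> X) \<times> (UNIV \<times> {0<..})" using assms by auto
  ultimately have "continuous_on (X \<times> X)
      (\<lambda>z. (\<lambda>((x, y), (c, \<alpha>)). PhiR P p A g r x y (fcomb b c) \<alpha>) (z, (c, \<alpha>)))"
    by (rule continuous_on_compose2[OF PhiR_continuous[OF good dens A_affine A_X]])
  then show ?thesis by (simp add: case_prod_unfold)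
qed

lemma PhiR_minimax:
  "(SUP xy\<in>X \<times> X. INF \<phi>\<alpha>\<in>Fspace b \<times> {0<..}.
      ereal (PhiR P p A g r (fst xy) (snd xy) (fst \<phi>\<alpha>) (snd \<phi>\<alpha>)))
   = (INF \<phi>\<alpha>\<in>Fspace b \<times> {0<..}. SUP xy\<in>X \<times> X.
      ereal (PhiR P p A g r (fst xy) (snd xy) (fst \<phi>\<alpha>) (snd \<phi>\<alpha>)))"
proof -
  have "(SUP z\<in>X \<times> X. INF w\<in>UNIV \<times> {0<..}. ereal (PhiR P p A g r (fst z) (snd z) (fcomb b (fst w)) (snd w)))
      = (INF w\<in>UNIV \<times> {0<..}. SUP z\<in>X \<times> X. ereal (PhiR P p A g r (fst z) (snd z) (fcomb b (fst w)) (snd w)))"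
  proof (rule minimax_ereal)
    show "compact (X \<times> X)" "convex (X \<times> X)" using X by (auto intro: compact_Times convex_Times)
    show "convex ((UNIV :: (real^'k) set) \<times> {0::real<..})" "(UNIV :: (real^'k) set) \<times> {0::real<..} \<noteq> {}"
      by (auto intro!: convex_Times)
    show "\<forall>w\<in>UNIV \<times> {0<..}. continuous_on (X \<times> X) (\<lambda>z. PhiR P p A g r (fst z) (snd z) (fcomb b (fst w)) (snd w))"
      using PhiR_continuous_in_xy by auto
    show "\<forall>w\<in>UNIV \<times> {0<..}. concave_on (X \<times> X) (\<lambda>z. PhiR P p A g r (fst z) (snd z) (fcomb b (fst w)) (snd w))"
      using PhiR_concave[OF good dens A_affine A_X X(2) fcomb_in_Fspace] by (auto simp: case_prod_unfold)
    show "\<forall>z\<in>X \<times> X. convex_on (UNIV \<times> {0<..}) (\<lambda>w. PhiR P p A g r (fst z) (snd z) (fcomb b (fst w)) (snd w))"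
    proof
      fix z assume "z \<in> X \<times> X"
      then have "A (fst z) \<in> M" "A (snd z) \<in> M" using A_X by auto
      from PhiR_convex[OF good dens A_affine A_X this] show
        "convex_on (UNIV \<times> {0<..}) (\<lambda>w. PhiR P p A g r (fst z) (snd z) (fcomb b (fst w)) (snd w))"
        by (simp add: case_prod_unfold)
    qed
  qed
  then show ?thesis unfolding Fspace_times_reparam image_image by simp
qed

lemma PhiR_inf_sup_affine:
  "(INF \<phi>\<alpha>\<in>Fspace b \<times> {0<..}. SUP xy\<in>X \<times> X.
      ereal (PhiR P p A g r (fst xy) (snd xy) (fst \<phi>\<alpha>) (snd \<phi>\<alpha>)))
   = (INF w\<in>UNIV \<times> {0<..}. ereal (Sup ((\<lambda>z. PhiR P p A g 0 (fst z) (snd z) (fcomb b (fst w)) (snd w)) ` (X \<times> X))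
        + 2 * snd w * r))"
  unfolding Fspace_times_reparam image_image
proof (rule INF_cong[OF refl])
  fix w :: "(real^'k) \<times> real" assume "w \<in> UNIV \<times> {0<..}"
  have "compact (X \<times> X)" "X \<times> X \<noteq> {}" using X by (auto intro: compact_Times)
  moreover have "continuous_on (X \<times> X) (\<lambda>z. PhiR P p A g 0 (fst z) (snd z) (fcomb b (fst w)) (snd w))"
    using PhiR_continuous_in_xy[of "snd w"] \<open>w \<in> UNIV \<times> {0<..}\<close> by auto
  ultimately show "(SUP z\<in>X \<times> X. ereal (PhiR P p A g r (fst z) (snd z) (fst (fcomb b (fst w), snd w)) (snd (fcomb b (fst w), snd w))))
      = ereal (Sup ((\<lambda>z. PhiR P p A g 0 (fst z) (snd z) (fcomb b (fst w)) (snd w)) ` (X \<times> X)) + 2 * snd w * r)"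
    unfolding fst_conv snd_conv PhiR_shift[of _ _ _ _ r]
    by (rule SUP_continuous_compact_shift)
qed

text \<open>Phi_* is finite, nonnegative (diagonal bound) and concave in r (infimum of affine
  functions).\<close>
lemma PhiStar_properties:
  shows "\<And>r. 0 \<le> r \<Longrightarrow> 0 \<le> PhiStar P p A g X (Fspace b) r \<and> PhiStar P p A g X (Fspace b) r < \<infinity>"
    and "concave_on {0..} (\<lambda>r. real_of_ereal (PhiStar P p A g X (Fspace b) r))"
proof -
  define W where "W = (UNIV :: (real^'k) set) \<times> {0::real<..}"
  define s where "s w = Sup ((\<lambda>z. PhiR P p A g 0 (fst z) (snd z) (fcomb b (fst w)) (snd w)) ` (X \<times> X))"
    for w :: "(real^'k) \<times> real"
  define Q where "Q r = (INF w\<in>W. ereal (s w + 2 * snd w * r))" for r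
  have PhiStar: "PhiStar P p A g X (Fspace b) r = ereal (1/2) * Q r" for r
    unfolding PhiStar_def PhiR_inf_sup_affine Q_def s_def W_def ..
  have "W \<noteq> {}" unfolding W_def by auto
  obtain x0 where "x0 \<in> X" using X(3) by blast
  have lower: "0 \<le> s w + 2 * snd w * r" if "w \<in> W" "r \<in> {0..}" for w r
  proof -
    have "bdd_above ((\<lambda>z. PhiR P p A g 0 (fst z) (snd z) (fcomb b (fst w)) (snd w)) ` (X \<times> X))"
      using PhiR_continuous_in_xy that(1) X unfolding W_def
      by (intro bounded_imp_bdd_above compact_imp_bounded compact_continuous_image compact_Times) auto
    then have "PhiR P p A g 0 x0 x0 (fcomb b (fst w)) (snd w) \<le> s w"
      unfolding s_def using \<open>x0 \<in> X\<close> by (intro cSup_upper) force+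
    moreover have "0 \<le> PhiR P p A g r x0 x0 (fcomb b (fst w)) (snd w)"
      using PhiR_diagonal_nonneg[OF good dens A_affine A_X] \<open>x0 \<in> X\<close> A_X that unfolding W_def by auto
    ultimately show ?thesis by (simp add: PhiR_shift[of _ _ _ _ r])
  qed
  show "0 \<le> PhiStar P p A g X (Fspace b) r \<and> PhiStar P p A g X (Fspace b) r < \<infinity>" if "0 \<le> r" for r
    using INF_affine_bounds[OF \<open>W \<noteq> {}\<close>, of s "\<lambda>w. 2 * snd w" r] lower that
    unfolding PhiStar Q_def by (cases "Q r") (auto simp: Q_def)
  have "concave_on {0..} (\<lambda>r. 1/2 * real_of_ereal (Q r))"
    unfolding Q_def by (intro concave_on_cmul INF_affine_concave[OF \<open>W \<noteq> {}\<close>] lower) auto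
  then show "concave_on {0..} (\<lambda>r. real_of_ereal (PhiStar P p A g X (Fspace b) r))"
    unfolding PhiStar by (simp add: real_of_ereal_mult)
qed

end

theorem mainTheorem2:
  fixes P :: "'a::polish_space measure"
    and M :: "'m::euclidean_space set"
    and p :: "'m \<Rightarrow> 'a \<Rightarrow> real"
    and b :: "'k::finite \<Rightarrow> 'a \<Rightarrow> real"
    and X :: "'n::euclidean_space set"
    and A :: "'n \<Rightarrow> 'm"
    and g :: "'n"
  assumes P_space: "space P = UNIV"
    and P_borel: "sets P = sets borel"
    and P_sigma: "sigma_finite_measure P"
    and dens: "density_family P M p"
    and b_borel: "\<And>k. b k \<in> borel_measurable borel"
    and F_const: "\<And>a::real. (\<lambda>\<omega>. a) \<in> Fspace b"
    and good: "good_pair P M p (Fspace b)"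
    and X_ne: "X \<noteq> {}" and X_convex: "convex X" and X_compact: "compact X"
    and A_affine: "linear (\<lambda>x. A x - A 0)"
    and A_X: "A ` X \<subseteq> M"
  shows "(\<forall>r\<ge>0.
      continuous_on ((X \<times> X) \<times> (UNIV \<times> {0<..}))
        (\<lambda>((x, y), (c, \<alpha>)). PhiR P p A g r x y (fcomb b c) \<alpha>)
    \<and> (\<forall>\<phi>\<in>Fspace b. \<forall>\<alpha>>0. concave_on (X \<times> X) (\<lambda>(x, y). PhiR P p A g r x y \<phi> \<alpha>))
    \<and> (\<forall>x\<in>X. \<forall>y\<in>X. convex_on (UNIV \<times> {0<..}) (\<lambda>(c, \<alpha>). PhiR P p A g r x y (fcomb b c) \<alpha>))
    \<and> (SUP xy\<in>X \<times> X. INF \<phi>\<alpha>\<in>Fspace b \<times> {0<..}.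
          ereal (PhiR P p A g r (fst xy) (snd xy) (fst \<phi>\<alpha>) (snd \<phi>\<alpha>)))
        = (INF \<phi>\<alpha>\<in>Fspace b \<times> {0<..}. SUP xy\<in>X \<times> X.
          ereal (PhiR P p A g r (fst xy) (snd xy) (fst \<phi>\<alpha>) (snd \<phi>\<alpha>)))
    \<and> (INF \<phi>\<alpha>\<in>Fspace b \<times> {0<..}. SUP xy\<in>X \<times> X.
          ereal (PhiR P p A g r (fst xy) (snd xy) (fst \<phi>\<alpha>) (snd \<phi>\<alpha>)))
        = 2 * PhiStar P p A g X (Fspace b) r)
    \<and> (\<forall>r\<ge>0. 0 \<le> PhiStar P p A g X (Fspace b) r \<and> PhiStar P p A g X (Fspace b) r < \<infinity>)
    \<and> concave_on {0..} (\<lambda>r. real_of_ereal (PhiStar P p A g X (Fspace b) r))"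
proof (intro conjI allI impI ballI)
  fix r :: real
  show "continuous_on ((X \<times> X) \<times> (UNIV \<times> {0<..}))
      (\<lambda>((x, y), (c, \<alpha>)). PhiR P p A g r x y (fcomb b c) \<alpha>)"
    by (rule PhiR_continuous[OF good dens A_affine A_X])
  show "concave_on (X \<times> X) (\<lambda>(x, y). PhiR P p A g r x y \<phi> \<alpha>)" if "\<phi> \<in> Fspace b" "\<alpha> > 0" for \<phi> \<alpha>
    using PhiR_concave[OF good dens A_affine A_X X_convex] that by simp
  show "convex_on (UNIV \<times> {0<..}) (\<lambda>(c, \<alpha>). PhiR P p A g r x y (fcomb b c) \<alpha>)" if "x \<in> X" "y \<in> X" for x y
    using PhiR_convex[OF good dens A_affine A_X] A_X that by blast
  show "(SUP xy\<in>X \<times> X. INF \<phi>\<alpha>\<in>Fspace b \<times> {0<..}. ereal (PhiR P p A g r (fst xy) (snd xy) (fst \<phi>\<alpha>) (snd \<phi>\<alpha>)))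
      = (INF \<phi>\<alpha>\<in>Fspace b \<times> {0<..}. SUP xy\<in>X \<times> X. ereal (PhiR P p A g r (fst xy) (snd xy) (fst \<phi>\<alpha>) (snd \<phi>\<alpha>)))"
    by (rule PhiR_minimax[OF good dens A_affine A_X X_compact X_convex X_ne])
  have "2 * (ereal (1/2) * q) = q" for q :: ereal by (cases q) auto
  then show "(INF \<phi>\<alpha>\<in>Fspace b \<times> {0<..}. SUP xy\<in>X \<times> X. ereal (PhiR P p A g r (fst xy) (snd xy) (fst \<phi>\<alpha>) (snd \<phi>\<alpha>)))
      = 2 * PhiStar P p A g X (Fspace b) r"
    unfolding PhiStar_def by simp
next
  show "0 \<le> PhiStar P p A g X (Fspace b) r" "PhiStar P p A g X (Fspace b) r < \<infinity>" if "0 \<le> r" for r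
    using PhiStar_properties(1)[OF good dens A_affine A_X X_compact X_convex X_ne that] by auto
  show "concave_on {0..} (\<lambda>r. real_of_ereal (PhiStar P p A g X (Fspace b) r))"
    by (rule PhiStar_properties(2)[OF good dens A_affine A_X X_compact X_convex X_ne])
qed

end
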